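(* Let $(X,d_X)$ be a compact metric space, let $(\phi_j)_{j\in\mathbb{N}}$ be maps $\phi_j:X\to X$ for which there is $0<\gamma<1$ with $d_X(\phi_j(x_1),\phi_j(x_2))\le \gamma\, d_X(x_1,x_2)$ for all $j\in\mathbb{N}$ and $x_1,x_2\in X$, and let $(q_j)_{j\in\mathbb{N}}$ be real numbers with $q_j\le 0$ for all $j$ and $\sup_{j\in\mathbb{N}} q_j=0$. For $\mu\in I(X)$ and $f\in C(X,\mathbb{R})$ put $$\Lambda_\mu(f):=\lim_{n\to\infty}\ \max_{1\le j\le n} I_j(\mu)(f),\qquad I_j(\mu)(f):=q_j+\mu(f\circ\phi_j).$$ Then this limit exists for every $f\in C(X,\mathbb{R})$, $\Lambda_\mu(f)=\sup_{j\in\mathbb{N}} I_j(\mu)(f)$, and the functional $\Lambda_\mu$ belongs to $I(X)$.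
   Context: Max-plus notation: $a\oplus b=\max(a,b)$, $a\odot b=a+b$ on $\mathbb{R}\cup\{-\infty\}$. $C(X,\mathbb{R})$ is the set of continuous real functions on $X$, with $(a\odot f)(x)=a+f(x)$ and $(f\oplus g)(x)=\max(f(x),g(x))$. A functional $m:C(X,\mathbb{R})\to\mathbb{R}$ is max-plus linear if $m(a+f)=a+m(f)$ for all $a\in\mathbb{R}$, $f\in C(X,\mathbb{R})$, and $m(\max(f,g))=\max(m(f),m(g))$ for all $f,g$. $I(X)$ (idempotent probabilities) is the set of max-plus linear functionals $m$ with $m(0)=0$. *)

theory Defs
  imports "HOL-Analysis.Analysis"
begin

text \<open>The compact metric space X is modelled as the whole type 'a (UNIV).
  C(X,R) is the set of functions f :: 'a => real with continuous_on UNIV f.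
  Functionals on C(X,R) are HOL functions (('a => real) => real); only their
  values on continuous functions matter.\<close>

definition maxplus_linear :: "(('a::topological_space \<Rightarrow> real) \<Rightarrow> real) \<Rightarrow> bool" where
  "maxplus_linear m \<longleftrightarrow>
     (\<forall>a f. continuous_on UNIV f \<longrightarrow> m (\<lambda>x. a + f x) = a + m f) \<and>
     (\<forall>f g. continuous_on UNIV f \<longrightarrow> continuous_on UNIV g \<longrightarrow>
            m (\<lambda>x. max (f x) (g x)) = max (m f) (m g))"

definition idem_prob :: "(('a::topological_space \<Rightarrow> real) \<Rightarrow> real) \<Rightarrow> bool" where
  "idem_prob m \<longleftrightarrow> maxplus_linear m \<and> m (\<lambda>x. 0) = 0"

definition Ij :: "(nat \<Rightarrow> real) \<Rightarrow> (nat \<Rightarrow> 'a \<Rightarrow> 'a) \<Rightarrow> (('a \<Rightarrow> real) \<Rightarrow> real)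
                   \<Rightarrow> nat \<Rightarrow> ('a \<Rightarrow> real) \<Rightarrow> real" where
  "Ij q \<phi> \<mu> j f = q j + \<mu> (f \<circ> \<phi> j)"

definition Lambda :: "(nat \<Rightarrow> real) \<Rightarrow> (nat \<Rightarrow> 'a \<Rightarrow> 'a) \<Rightarrow> (('a \<Rightarrow> real) \<Rightarrow> real)
                   \<Rightarrow> ('a \<Rightarrow> real) \<Rightarrow> real" where
  "Lambda q \<phi> \<mu> f = lim (\<lambda>n. Max ((\<lambda>j. Ij q \<phi> \<mu> j f) ` {1..n}))"

end

theory Submission
  imports Defs
begin

text \<open>Since \<open>\<mu>\<close> is monotone and fixes constants, each \<open>I\<^sub>j(\<mu>)(f)\<close> is bounded by
  \<open>max f\<close>, which is finite by compactness; so the partial maxima increase to the finite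
  supremum. A supremum of a bounded family of max-plus linear functionals is again max-plus
  linear, and \<open>\<Lambda>\<^sub>\<mu>(0) = sup\<^sub>j q\<^sub>j = 0\<close>.\<close>

lemma tendsto_Max_atLeastAtMost_SUP:
  fixes x :: "nat \<Rightarrow> 'a::{conditionally_complete_linorder, linorder_topology}"
  assumes bdd: "bdd_above (x ` {m..})"
  shows "(\<lambda>n. Max (x ` {m..n})) \<longlonglongrightarrow> (SUP j\<in>{m..}. x j)"
proof (rule order_tendstoI)
  fix a assume "a < (SUP j\<in>{m..}. x j)"
  then obtain j where j: "m \<le> j" "a < x j"
    using less_cSUP_iff[OF _ bdd] by auto
  have "a < Max (x ` {m..n})" if "j \<le> n" for n
    using j that by (auto simp: Max_gr_iff)
  then show "\<forall>\<^sub>F n in sequentially. a < Max (x ` {m..n})"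
    by (rule eventually_sequentiallyI)
next
  fix a assume "(SUP j\<in>{m..}. x j) < a"
  then have "Max (x ` {m..n}) < a" if "m \<le> n" for n
    using that cSUP_upper[OF _ bdd] by fastforce
  then show "\<forall>\<^sub>F n in sequentially. Max (x ` {m..n}) < a"
    by (rule eventually_sequentiallyI)
qed

lemma maxplus_linear_cong:
  assumes "\<And>f. continuous_on UNIV f \<Longrightarrow> m f = m' f"
  shows "maxplus_linear m \<longleftrightarrow> maxplus_linear m'"
proof -
  have "m (\<lambda>x. a + f x) = m' (\<lambda>x. a + f x)" if "continuous_on UNIV f" for a f
    using that by (intro assms continuous_intros)
  moreover have "m (\<lambda>x. max (f x) (g x)) = m' (\<lambda>x. max (f x) (g x))"
    if "continuous_on UNIV f" "continuous_on UNIV g" for f g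
    using that by (intro assms continuous_intros)
  ultimately show ?thesis
    using assms unfolding maxplus_linear_def by auto
qed

lemma maxplus_linear_mono:
  assumes "maxplus_linear m" "continuous_on UNIV f" "continuous_on UNIV g" "\<And>x. f x \<le> g x"
  shows "m f \<le> m g"
proof -
  have "(\<lambda>x. max (f x) (g x)) = g"
    using assms(4) by (simp add: max_absorb2)
  then have "m g = max (m f) (m g)"
    using assms(1-3) unfolding maxplus_linear_def by metis
  then show ?thesis by simp
qed

lemma idem_prob_const:
  assumes "idem_prob m"
  shows "m (\<lambda>x. c) = c"
proof -
  have "m (\<lambda>x. c + 0) = c + m (\<lambda>x. 0)"
    using assms continuous_on_const unfolding idem_prob_def maxplus_linear_def by blast
  then show ?thesis
    using assms unfolding idem_prob_def by simp
qed

lemma idem_prob_le_const: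
  assumes "idem_prob m" "continuous_on UNIV f" "\<And>x. f x \<le> c"
  shows "m f \<le> c"
  using maxplus_linear_mono[of m f "\<lambda>x. c"] idem_prob_const[of m c] assms
  unfolding idem_prob_def by auto

lemma maxplus_linear_shift_comp:
  fixes m :: "('a::topological_space \<Rightarrow> real) \<Rightarrow> real" and \<phi> :: "'a \<Rightarrow> 'b::topological_space"
  assumes "maxplus_linear m" "continuous_on UNIV \<phi>"
  shows "maxplus_linear (\<lambda>f. c + m (f \<circ> \<phi>))"
proof -
  have cont: "continuous_on UNIV (f \<circ> \<phi>)" if "continuous_on UNIV f" for f :: "'b \<Rightarrow> real"
    using continuous_on_compose2[OF that assms(2)] by (simp add: comp_def)
  have "m ((\<lambda>x. a + f x) \<circ> \<phi>) = a + m (f \<circ> \<phi>)" if "continuous_on UNIV f" for a f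
    using assms(1) cont[OF that] unfolding maxplus_linear_def comp_def by auto
  moreover have "m ((\<lambda>x. max (f x) (g x)) \<circ> \<phi>) = max (m (f \<circ> \<phi>)) (m (g \<circ> \<phi>))"
    if "continuous_on UNIV f" "continuous_on UNIV g" for f g
    using assms(1) cont[OF that(1)] cont[OF that(2)] unfolding maxplus_linear_def comp_def by auto
  ultimately show ?thesis
    unfolding maxplus_linear_def by (simp add: max_add_distrib_right)
qed

lemma maxplus_linear_SUP:
  fixes m :: "'i \<Rightarrow> ('a::topological_space \<Rightarrow> real) \<Rightarrow> real"
  assumes "J \<noteq> {}" and lin: "\<And>j. j \<in> J \<Longrightarrow> maxplus_linear (m j)"
    and bdd: "\<And>f. continuous_on UNIV f \<Longrightarrow> bdd_above ((\<lambda>j. m j f) ` J)"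
  shows "maxplus_linear (\<lambda>f. SUP j\<in>J. m j f)"
proof -
  have "(SUP j\<in>J. m j (\<lambda>x. a + f x)) = a + (SUP j\<in>J. m j f)" if "continuous_on UNIV f" for a f
  proof -
    have "(SUP j\<in>J. m j (\<lambda>x. a + f x)) = (SUP j\<in>J. a + m j f)"
      using lin that unfolding maxplus_linear_def by (intro SUP_cong) auto
    also have "\<dots> = a + (SUP j\<in>J. m j f)"
      using Sup_add_eq[OF bdd[OF that] \<open>J \<noteq> {}\<close>] .
    finally show ?thesis .
  qed
  moreover have "(SUP j\<in>J. m j (\<lambda>x. max (f x) (g x))) = max (SUP j\<in>J. m j f) (SUP j\<in>J. m j g)"
    if "continuous_on UNIV f" "continuous_on UNIV g" for f g
  proof -
    have "(SUP j\<in>J. m j (\<lambda>x. max (f x) (g x))) = (SUP j\<in>J. max (m j f) (m j g))"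
      using lin that unfolding maxplus_linear_def by (intro SUP_cong) auto
    also have "\<dots> = max (SUP j\<in>J. m j f) (SUP j\<in>J. m j g)"
      using SUP_sup_distrib[OF \<open>J \<noteq> {}\<close> bdd[OF that(1)] bdd[OF that(2)]]
      by (simp add: sup_max)
    finally show ?thesis .
  qed
  ultimately show ?thesis
    unfolding maxplus_linear_def by simp
qed

lemma bdd_above_Ij:
  assumes "compact (UNIV :: 'a::topological_space set)" "idem_prob \<mu>"
    and "\<And>j. j \<in> J \<Longrightarrow> q j \<le> 0" "\<And>j. j \<in> J \<Longrightarrow> continuous_on UNIV (\<phi> j)"
    and f: "continuous_on UNIV (f :: 'a \<Rightarrow> real)"
  shows "bdd_above ((\<lambda>j. Ij q \<phi> \<mu> j f) ` J)"
proof -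
  obtain x0 where max_f: "\<And>x. f x \<le> f x0"
    using continuous_attains_sup[OF assms(1) _ f] by auto
  have "Ij q \<phi> \<mu> j f \<le> f x0" if j: "j \<in> J" for j
  proof -
    have "continuous_on UNIV (f \<circ> \<phi> j)"
      using continuous_on_compose2[OF f assms(4)[OF j]] by (simp add: comp_def)
    then have "\<mu> (f \<circ> \<phi> j) \<le> f x0"
      using idem_prob_le_const[OF assms(2)] max_f by auto
    then show ?thesis
      using assms(3)[OF j] unfolding Ij_def by simp
  qed
  then show ?thesis by (rule bdd_aboveI2)
qed

theorem lemma2p7:
  fixes \<phi> :: "nat \<Rightarrow> 'a::metric_space \<Rightarrow> 'a" and q :: "nat \<Rightarrow> real" and \<gamma> :: real
    and \<mu> :: "('a \<Rightarrow> real) \<Rightarrow> real"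
  assumes "compact (UNIV :: 'a set)"
    and "0 < \<gamma>" and "\<gamma> < 1"
    and "\<forall>j\<ge>1. \<forall>x1 x2. dist (\<phi> j x1) (\<phi> j x2) \<le> \<gamma> * dist x1 x2"
    and "\<forall>j\<ge>1. q j \<le> 0"
    and "(SUP j\<in>{1..}. q j) = 0"
    and "idem_prob \<mu>"
  shows "(\<forall>f. continuous_on UNIV f \<longrightarrow>
            ((\<lambda>n. Max ((\<lambda>j. Ij q \<phi> \<mu> j f) ` {1..n}))
               \<longlonglongrightarrow> (SUP j\<in>{1..}. Ij q \<phi> \<mu> j f)))
         \<and> (\<forall>f. continuous_on UNIV f \<longrightarrow> Lambda q \<phi> \<mu> f = (SUP j\<in>{1..}. Ij q \<phi> \<mu> j f))
         \<and> idem_prob (Lambda q \<phi> \<mu>)"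
proof -
  have \<phi>_cont: "continuous_on UNIV (\<phi> j)" if "j \<in> {1..}" for j
    using assms(2,4) that by (intro lipschitz_on_continuous_on[of \<gamma>] lipschitz_onI) auto
  have bdd: "bdd_above ((\<lambda>j. Ij q \<phi> \<mu> j f) ` {1..})" if "continuous_on UNIV f" for f
    using bdd_above_Ij[where J="{1..}" and \<phi>=\<phi>, OF assms(1,7) _ \<phi>_cont that] assms(5) by simp
  have limit: "(\<lambda>n. Max ((\<lambda>j. Ij q \<phi> \<mu> j f) ` {1..n})) \<longlonglongrightarrow> (SUP j\<in>{1..}. Ij q \<phi> \<mu> j f)"
    if "continuous_on UNIV f" for f
    using tendsto_Max_atLeastAtMost_SUP[OF bdd[OF that]] .
  have Lambda_eq: "Lambda q \<phi> \<mu> f = (SUP j\<in>{1..}. Ij q \<phi> \<mu> j f)"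
    if "continuous_on UNIV f" for f
    unfolding Lambda_def using limit[OF that] by (rule limI)
  have "maxplus_linear (\<lambda>f. SUP j\<in>{1..}. Ij q \<phi> \<mu> j f)"
  proof (rule maxplus_linear_SUP)
    show "maxplus_linear (Ij q \<phi> \<mu> j)" if "j \<in> {1..}" for j
      unfolding Ij_def using assms(7) \<phi>_cont[OF that]
      by (intro maxplus_linear_shift_comp) (simp_all add: idem_prob_def)
  qed (use bdd in auto)
  then have linear: "maxplus_linear (Lambda q \<phi> \<mu>)"
    using maxplus_linear_cong[of "Lambda q \<phi> \<mu>", OF Lambda_eq] by simp
  have normalized: "Lambda q \<phi> \<mu> (\<lambda>x. 0) = 0"
    using Lambda_eq[of "\<lambda>x. 0"] assms(6) idem_prob_const[OF assms(7)]
    by (simp add: Ij_def comp_def)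
  show ?thesis
    unfolding idem_prob_def using limit Lambda_eq linear normalized by (intro conjI allI impI)
qed

end
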